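(* (i) If $d$ is large enough, then for every $i\in\{1,\dots,k+1\}$ and every $y\in C_{i-1}$, $D_i(y)\subset B(y,r_i)\cap C_i$. (ii) For $d$ large enough: let $x_0\in D_0$; if there exist $X_1,\dots,X_k\in\chi_1$ and $X_{k+1}\in\chi_\rho$ such that $X_1\in D_1(x_0)$ and $X_i\in D_i(X_{i-1})$ for $2\le i\le k+1$, then the event $\mathcal G^+(x_0)$ occurs.
   Context: Fix $\rho>1$, an integer $k\ge1$, $\kappa\in(\kappa^c_\rho(k),1)$, and $(a_i)_{2\le i\le k+1}\in(0,1)^k$ satisfying $1<\kappa^{k+1}\frac{(1+\rho)^2}{4\rho}\sqrt{\prod_{2\le j\le k+1}(1-a_j^2)}<\kappa\frac{d_{k+1}}{2\rho}$, where $r_1=r_{k+1}=1+\rho$, $r_i=2$ for $2\le i\le k$, $d_1=1+\rho$, $d_i^2=d_{i-1}^2+2r_ia_id_{i-1}+r_i^2$ ($d_i>0$), and $\kappa^c_\rho(k)=\inf_{0\le a_i<1}\max\big((4\rho/((1+\rho)^2\sqrt{\prod_{2\le i\le k+1}(1-a_i^2)}))^{1/(k+1)},\,2\rho/d_{k+1}\big)$. For $d\ge3$ let $v_d$ be the volume of the unit ball of $\mathbb{R}^d$, $B(y,r)$ the open ball in $\mathbb{R}^d$, $B''(c,r)$ the open ball in $\mathbb{R}^{d-2}$, and write $x=(x',x'')\in\mathbb{R}^2\times\mathbb{R}^{d-2}$. Let $\chi_1,\chi_\rho$ be independent homogeneous Poisson point processes on $\mathbb{R}^d$ with intensities $\kappa^d/(v_d2^d)$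 and $\kappa^d/(v_d2^d\rho^d)$. Sets: $D'_0=(-d^{-1/2},d^{-1/2})\times(-d^{-1/2},0)$, $D'_i=(0,d^{-1/2})^2$ for $1\le i\le k+1$; $C''_0=\{0\}$, $C''_i=B''(0,d_i-2d^{-1})\setminus B''(0,d_i-3d^{-1})$ for $1\le i\le k+1$; $C_i=D'_i\times C''_i$. For $2\le i\le k+1$ and $d$ large, $\theta_i\in(0,\pi/2)$ is defined by $\cos\theta_i=\frac{d_{i-1}+a_ir_i}{d_i}+d^{-1/2}$. For $y\in C_{i-1}$: $D''_i(y'')=\{z''\in C''_i:\langle z'',y''\rangle\ge\|y''\|\|z''\|\cos\theta_i\}$ for $2\le i\le k+1$, $D''_1(y'')=C''_1$, and $D_i(y)=D'_i\times D''_i(y'')$; $D_0=D'_0\times C''_0$. Event: with $W^+=d^{-1/2}((0,1)\times(0,1)\times\mathbb{R}^{d-2})$, for $x_0\in D_0$, $\mathcal G^+(x_0)$ is the event that there exist distinct $x_1,\dots,x_k\in\chi_1\cap W^+$ and $x_{k+1}\in\chi_\rho\cap W^+$ with $\|x_1-x_0\|<1+\rho$, $\|x_{i+1}-x_i\|<2$ for $1\le i\le k-1$, and $\|x_{k+1}-x_k\|<1+\rho$. *)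

theory Defs
  imports Complex_Main
begin

text \<open>Points of R^d are represented as functions nat => real vanishing at indices >= d.
  Coordinates 0,1 form x' and coordinates 2..d-1 form x''.\<close>

definition Rd :: "nat \<Rightarrow> (nat \<Rightarrow> real) set" where
  "Rd d = {x. \<forall>j\<ge>d. x j = 0}"

definition nrm :: "nat \<Rightarrow> (nat \<Rightarrow> real) \<Rightarrow> real" where
  "nrm d x = sqrt (\<Sum>j<d. (x j)^2)"

definition nrm2 :: "nat \<Rightarrow> (nat \<Rightarrow> real) \<Rightarrow> real" where
  "nrm2 d x = sqrt (\<Sum>j\<in>{2..<d}. (x j)^2)"

definition inner2 :: "nat \<Rightarrow> (nat \<Rightarrow> real) \<Rightarrow> (nat \<Rightarrow> real) \<Rightarrow> real" where
  "inner2 d x z = (\<Sum>j\<in>{2..<d}. x j * z j)"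

definition Bd :: "nat \<Rightarrow> (nat \<Rightarrow> real) \<Rightarrow> real \<Rightarrow> (nat \<Rightarrow> real) set" where
  "Bd d y r = {x \<in> Rd d. nrm d (x - y) < r}"

definition rr :: "real \<Rightarrow> nat \<Rightarrow> nat \<Rightarrow> real" where
  "rr \<rho> k i = (if i = 1 \<or> i = k + 1 then 1 + \<rho> else 2)"

text \<open>d_i (i >= 1); the value at index 0 is irrelevant\<close>
fun dd :: "real \<Rightarrow> nat \<Rightarrow> (nat \<Rightarrow> real) \<Rightarrow> nat \<Rightarrow> real" where
  "dd \<rho> k a 0 = 0"
| "dd \<rho> k a (Suc 0) = 1 + \<rho>"
| "dd \<rho> k a (Suc (Suc n)) =
     sqrt ((dd \<rho> k a (Suc n))^2 + 2 * rr \<rho> k (Suc (Suc n)) * a (Suc (Suc n)) * dd \<rho> k a (Suc n)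
           + (rr \<rho> k (Suc (Suc n)))^2)"

definition kappa_c :: "real \<Rightarrow> nat \<Rightarrow> real" where
  "kappa_c \<rho> k = (INF a \<in> {a. \<forall>i\<in>{2..k+1}. 0 \<le> a i \<and> a i < 1}.
      max ((4 * \<rho> / ((1 + \<rho>)^2 * sqrt (\<Prod>i\<in>{2..k+1}. 1 - (a i)^2))) powr (1 / real (k + 1)))
          (2 * \<rho> / dd \<rho> k a (k + 1)))"

text \<open>D'_0 and D'_i as conditions on the first two coordinates\<close>
definition Dp0 :: "nat \<Rightarrow> (nat \<Rightarrow> real) set" where
  "Dp0 d = {x. - 1 / sqrt d < x 0 \<and> x 0 < 1 / sqrt d \<and> - 1 / sqrt d < x 1 \<and> x 1 < 0}"

definition Dp :: "nat \<Rightarrow> (nat \<Rightarrow> real) set" where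
  "Dp d = {x. 0 < x 0 \<and> x 0 < 1 / sqrt d \<and> 0 < x 1 \<and> x 1 < 1 / sqrt d}"

definition CC :: "real \<Rightarrow> nat \<Rightarrow> (nat \<Rightarrow> real) \<Rightarrow> nat \<Rightarrow> nat \<Rightarrow> (nat \<Rightarrow> real) set" where
  "CC \<rho> k a d i =
     (if i = 0 then {x \<in> Rd d. x \<in> Dp0 d \<and> (\<forall>j\<in>{2..<d}. x j = 0)}
      else {x \<in> Rd d. x \<in> Dp d \<and> dd \<rho> k a i - 3 / d \<le> nrm2 d x \<and> nrm2 d x < dd \<rho> k a i - 2 / d})"

definition costh :: "real \<Rightarrow> nat \<Rightarrow> (nat \<Rightarrow> real) \<Rightarrow> nat \<Rightarrow> nat \<Rightarrow> real" where
  "costh \<rho> k a d i = (dd \<rho> k a (i - 1) + a i * rr \<rho> k i) / dd \<rho> k a i + 1 / sqrt d"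

definition DD :: "real \<Rightarrow> nat \<Rightarrow> (nat \<Rightarrow> real) \<Rightarrow> nat \<Rightarrow> nat \<Rightarrow> (nat \<Rightarrow> real) \<Rightarrow> (nat \<Rightarrow> real) set" where
  "DD \<rho> k a d i y =
     (if i \<le> 1 then CC \<rho> k a d i
      else {z \<in> CC \<rho> k a d i. inner2 d z y \<ge> nrm2 d y * nrm2 d z * costh \<rho> k a d i})"

definition Wplus :: "nat \<Rightarrow> (nat \<Rightarrow> real) set" where
  "Wplus d = {x \<in> Rd d. x \<in> Dp d}"

text \<open>the event G^+(x_0) for a realization (S1, Srho) of (chi_1, chi_rho)\<close>
definition Gplus :: "real \<Rightarrow> nat \<Rightarrow> nat \<Rightarrow> (nat \<Rightarrow> real) set \<Rightarrow> (nat \<Rightarrow> real) set \<Rightarrow> (nat \<Rightarrow> real) \<Rightarrow> bool" where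
  "Gplus \<rho> k d S1 Srho x0 =
     (\<exists>x :: nat \<Rightarrow> (nat \<Rightarrow> real).
        (\<forall>i\<in>{1..k}. x i \<in> S1 \<inter> Wplus d) \<and> x (k + 1) \<in> Srho \<inter> Wplus d \<and>
        inj_on x {1..k+1} \<and>
        nrm d (x 1 - x0) < 1 + \<rho> \<and>
        (\<forall>i\<in>{1..k-1}. nrm d (x (i + 1) - x i) < 2) \<and>
        nrm d (x (k + 1) - x k) < 1 + \<rho>)"

end

theory Submission
  imports Defs
begin

text \<open>
  Split \<open>\<parallel>z - y\<parallel>\<^sup>2 = \<parallel>z' - y'\<parallel>\<^sup>2 + \<parallel>z''\<parallel>\<^sup>2 + \<parallel>y''\<parallel>\<^sup>2 - 2\<langle>z'', y''\<rangle>\<close>; the planar part is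
  \<open>O(1/d)\<close>. For \<open>i = 1\<close> we have \<open>y'' = 0\<close>, and \<open>\<parallel>z''\<parallel> < 1 + \<rho> - 2/d\<close> leaves room for the
  planar part. For \<open>i \<ge> 2\<close> the norms \<open>\<parallel>y''\<parallel>, \<parallel>z''\<parallel>\<close> lie in shells of width \<open>O(1/d)\<close> just
  below \<open>d\<^sub>i\<^sub>-\<^sub>1, d\<^sub>i\<close>, so by the angle condition and the recursion
  \<open>d\<^sub>i\<^sup>2 = d\<^sub>i\<^sub>-\<^sub>1\<^sup>2 + 2 r\<^sub>i a\<^sub>i d\<^sub>i\<^sub>-\<^sub>1 + r\<^sub>i\<^sup>2\<close> (law of cosines) the radial terms are at most
  \<open>r\<^sub>i\<^sup>2 - 2/\<surd>d + O(1/d)\<close>. This gives (i); chaining (i) gives the distance constraints of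
  \<open>\<G>\<^sup>+(x\<^sub>0)\<close>, and the points are distinct because \<open>d\<^sub>j - d\<^sub>i \<ge> 2/d\<^sub>k\<^sub>+\<^sub>1\<close> for \<open>i < j\<close>
  separates the shells once \<open>d\<close> is large.
\<close>

lemma first_step_sq_bound:
  fixes p e n D :: real
  assumes "p < 8 * e" "0 \<le> n" "n < D - 2 * e" "0 \<le> e" "e \<le> D - 2"
  shows "p + n^2 < D^2"
proof -
  have "n^2 < (D - 2 * e)^2" using assms(2,3) by (intro power_strict_mono) auto
  also have "\<dots> = D^2 - 8 * e - 4 * e * (D - 2 - e)" by (simp add: power2_eq_square algebra_simps)
  also have "\<dots> \<le> D^2 - 8 * e" using assms(4,5) by simp
  finally show ?thesis using assms(1) by simp
qed

text \<open>The extra \<open>1/s\<close> in the angle condition gains \<open>2/s\<close>, which beats the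
  \<open>O(M/s\<^sup>2)\<close> lost by shrinking the norms into the shells.\<close>

lemma law_of_cosines_shell_bound:
  fixes A B M r a s p ny nz ip :: real
  assumes A: "2 \<le> A" "A \<le> M" and B: "2 \<le> B" "B \<le> M"
    and r: "0 \<le> r" and a: "0 \<le> a" "a \<le> 1"
    and law: "B^2 = A^2 + 2 * r * a * A + r^2" and s: "1 + 6 * M < s"
    and ny: "A - 3 / s^2 \<le> ny" "ny < A" and nz: "B - 3 / s^2 \<le> nz" "nz < B"
    and ip: "ny * nz * ((A + a * r) / B + 1 / s) \<le> ip" and p: "p < 2 / s^2"
  shows "p + nz^2 + ny^2 - 2 * ip < r^2"
proof -
  define c where "c = (A + a * r) / B"
  define e where "e = 1 / s^2"
  have ny_e: "A - 3 * e \<le> ny" and nz_e: "B - 3 * e \<le> nz" and p_e: "p < 2 * e"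
    using ny nz p by (simp_all add: e_def)
  have "(a * r)^2 \<le> r^2"
    using a r power_le_one[of a 2] by (simp add: power_mult_distrib mult_left_le_one_le)
  then have "(A + a * r)^2 \<le> B^2" using law by (simp add: power2_eq_square algebra_simps)
  from power2_le_imp_le[OF this] have "A + a * r \<le> B" using B by simp
  then have c: "0 \<le> c" "c \<le> 1" using A B a r by (simp_all add: c_def)
  have "13 < s" using s A by linarith
  then have "13 * 13 < s^2" unfolding power2_eq_square by (intro mult_strict_mono) auto
  then have e: "0 < e" "3 * e \<le> 1" using \<open>13 < s\<close> by (simp_all add: e_def divide_le_eq)
  have sq: "ny^2 + nz^2 < A^2 + B^2"
    using ny_e nz_e ny nz A B e by (intro add_strict_mono power_strict_mono) auto
  define X where "X = ny * nz"
  have "(A - 3 * e) * (B - 3 * e) \<le> X"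
    using ny_e nz_e A B e unfolding X_def by (intro mult_mono) auto
  moreover have "(A - 3 * e) * (B - 3 * e) = A * B - 3 * e * (A + B) + 9 * e^2"
    by (simp add: power2_eq_square algebra_simps)
  ultimately have "A * B - 3 * e * (A + B) \<le> X" using zero_le_power2[of e] by linarith
  then have "c * (A * B - 3 * e * (A + B)) \<le> c * X" using c(1) by (rule mult_left_mono)
  then have "c * (A * B) - 3 * e * (c * (A + B)) \<le> c * X" by (simp add: algebra_simps)
  moreover have "c * (A * B) = A * (A + a * r)" using B by (simp add: c_def)
  moreover have "c * (A + B) \<le> A + B" using A B c by (intro mult_left_le_one_le) auto
  then have "c * (A + B) \<le> 2 * M" using A B by linarith
  then have "3 * e * (c * (A + B)) \<le> 3 * e * (2 * M)" using e by simp
  moreover have "1 \<le> X"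
    using ny_e nz_e A B e mult_mono[of 1 ny 1 nz] unfolding X_def by auto
  then have "1 / s \<le> X / s" using \<open>13 < s\<close> by (intro divide_right_mono) auto
  moreover have "c * X + X / s \<le> ip" using ip by (simp add: X_def c_def algebra_simps)
  ultimately have ip_ge: "A * (A + a * r) - 3 * e * (2 * M) + 1 / s \<le> ip" by linarith
  have "(2 + 12 * M) / s < 2"
    using s \<open>13 < s\<close> by (simp add: divide_less_eq)
  then have "(2 + 12 * M) * e < 2 / s"
    using \<open>13 < s\<close> by (simp add: e_def power2_eq_square divide_less_eq)
  moreover have "A^2 + B^2 - 2 * (A * (A + a * r)) = r^2"
    using law by (simp add: power2_eq_square algebra_simps)
  ultimately show ?thesis using sq ip_ge p_e by (simp add: algebra_simps)
qed

lemma nrm_sq_split: "2 \<le> d \<Longrightarrow> (nrm d v)^2 = (v 0)^2 + (v 1)^2 + (nrm2 d v)^2"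
proof -
  assume "2 \<le> d"
  then have "(\<Sum>j<d. (v j)^2) = (\<Sum>j<2. (v j)^2) + (\<Sum>j\<in>{2..<d}. (v j)^2)"
    by (simp add: atLeast0LessThan[symmetric] sum.atLeastLessThan_concat)
  then show ?thesis by (simp add: nrm_def nrm2_def sum_nonneg numeral_2_eq_2)
qed

lemma nrm2_sq: "(nrm2 d v)^2 = (\<Sum>j\<in>{2..<d}. (v j)^2)"
  by (simp add: nrm2_def sum_nonneg)

lemma nrm2_diff_sq: "(nrm2 d (z - y))^2 = (nrm2 d z)^2 + (nrm2 d y)^2 - 2 * inner2 d z y"
  by (simp add: nrm2_sq inner2_def power2_diff sum.distrib sum_subtractf sum_distrib_left algebra_simps)

lemma nrm2_nonneg: "0 \<le> nrm2 d v"
  by (simp add: nrm2_def sum_nonneg)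

lemma mem_BdI: "z \<in> Rd d \<Longrightarrow> 0 \<le> r \<Longrightarrow> (nrm d (z - y))^2 < r^2 \<Longrightarrow> z \<in> Bd d y r"
  by (auto simp: Bd_def nrm_def intro: power2_less_imp_less)

lemma sq_diff_less_of_interval:
  fixes x y lo hi :: real
  assumes "lo < x" "x < hi" "lo < y" "y < hi"
  shows "(x - y)^2 < (hi - lo)^2"
proof -
  have "\<bar>x - y\<bar> < hi - lo" using assms by (simp add: abs_less_iff)
  from power_strict_mono[OF this abs_ge_zero, of 2] show ?thesis by simp
qed

lemma Dp0_Dp_coord_bound:
  assumes "y \<in> Dp0 d" "z \<in> Dp d"
  shows "(z 0 - y 0)^2 + (z 1 - y 1)^2 < 8 / real d"
proof -
  define t where "t = 1 / sqrt (real d)"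
  have coord: "(z j - y j)^2 < (t - - t)^2" if "j \<in> {0, 1}" for j
    using assms that by (intro sq_diff_less_of_interval) (auto simp: Dp0_def Dp_def t_def)
  have "(t - - t)^2 = 4 / real d" by (simp add: t_def power2_eq_square)
  then show ?thesis using coord[of 0] coord[of 1] by simp
qed

lemma Dp_coord_bound:
  assumes "y \<in> Dp d" "z \<in> Dp d"
  shows "(z 0 - y 0)^2 + (z 1 - y 1)^2 < 2 / real d"
proof -
  define t where "t = 1 / sqrt (real d)"
  have coord: "(z j - y j)^2 < (t - 0)^2" if "j \<in> {0, 1}" for j
    using assms that by (intro sq_diff_less_of_interval) (auto simp: Dp_def t_def)
  have "(t - 0)^2 = 1 / real d" by (simp add: t_def power2_eq_square)
  then show ?thesis using coord[of 0] coord[of 1] by simp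
qed

lemma nrm_diff_sq:
  "2 \<le> d \<Longrightarrow> (nrm d (z - y))^2
     = (z 0 - y 0)^2 + (z 1 - y 1)^2 + (nrm2 d z)^2 + (nrm2 d y)^2 - 2 * inner2 d z y"
  using nrm_sq_split[of d "z - y"] nrm2_diff_sq[of d z y] by simp

lemma DD_subset_CC: "DD \<rho> k a d i y \<subseteq> CC \<rho> k a d i"
  by (auto simp: DD_def)

lemma dist_sq_first_step:
  assumes "2 \<le> d" "1 / real d \<le> \<rho> - 1" "y \<in> CC \<rho> k a d 0" "z \<in> CC \<rho> k a d 1"
  shows "(nrm d (z - y))^2 < (rr \<rho> k 1)^2"
proof -
  have "y \<in> Dp0 d" and y0: "\<forall>j\<in>{2..<d}. y j = 0" using assms(3) by (auto simp: CC_def)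
  moreover have "z \<in> Dp d" and z: "1 + \<rho> - 3 / d \<le> nrm2 d z" "nrm2 d z < 1 + \<rho> - 2 / d"
    using assms(4) by (auto simp: CC_def)
  ultimately have "(z 0 - y 0)^2 + (z 1 - y 1)^2 < 8 * (1 / real d)"
    using Dp0_Dp_coord_bound by simp
  then have "(z 0 - y 0)^2 + (z 1 - y 1)^2 + (nrm2 d z)^2 < (1 + \<rho>)^2"
    using z assms(2) nrm2_nonneg by (intro first_step_sq_bound) auto
  moreover have "nrm2 d y = 0" "inner2 d z y = 0" using y0 by (simp_all add: nrm2_def inner2_def)
  ultimately show ?thesis using nrm_diff_sq[OF assms(1)] by (simp add: rr_def)
qed

lemma rr_ge_2: "1 \<le> \<rho> \<Longrightarrow> 2 \<le> rr \<rho> k i"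
  by (simp add: rr_def)

lemma dd_Suc:
  "1 \<le> n \<Longrightarrow> dd \<rho> k a (Suc n) =
     sqrt ((dd \<rho> k a n)^2 + 2 * rr \<rho> k (Suc n) * a (Suc n) * dd \<rho> k a n + (rr \<rho> k (Suc n))^2)"
  by (cases n) auto

context
  fixes \<rho> :: real and k :: nat and a :: "nat \<Rightarrow> real"
  assumes \<rho>: "1 \<le> \<rho>" and a_nonneg: "\<forall>i\<in>{2..k+1}. 0 \<le> a i"
begin

lemma dd_Suc_increment_ge_4:
  assumes "1 \<le> n" "Suc n \<le> k + 1" "0 \<le> dd \<rho> k a n"
  shows "4 \<le> 2 * rr \<rho> k (Suc n) * a (Suc n) * dd \<rho> k a n + (rr \<rho> k (Suc n))^2"
proof -
  have "2 \<le> rr \<rho> k (Suc n)" "0 \<le> a (Suc n)"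
    using rr_ge_2[OF \<rho>] a_nonneg assms by auto
  then have "0 \<le> 2 * rr \<rho> k (Suc n) * a (Suc n) * dd \<rho> k a n"
    using assms(3) by simp
  moreover have "4 \<le> (rr \<rho> k (Suc n))^2"
    using power_mono[OF rr_ge_2[OF \<rho>], of 2 k "Suc n"] by simp
  ultimately show ?thesis by linarith
qed

lemma dd_ge:
  assumes "1 \<le> i" "i \<le> k + 1"
  shows "1 + \<rho> \<le> dd \<rho> k a i"
  using assms
proof (induction i rule: dec_induct)
  case base
  show ?case by simp
next
  case (step n)
  then have IH: "1 + \<rho> \<le> dd \<rho> k a n" by simp
  also have "\<dots> \<le> dd \<rho> k a (Suc n)"
    unfolding dd_Suc[OF step(1)]
    using dd_Suc_increment_ge_4[of n] step IH \<rho> by (intro real_le_rsqrt) simp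
  finally show ?case .
qed

lemma dd_Suc_sq:
  assumes "1 \<le> n" "Suc n \<le> k + 1"
  shows "(dd \<rho> k a (Suc n))^2
    = (dd \<rho> k a n)^2 + 2 * rr \<rho> k (Suc n) * a (Suc n) * dd \<rho> k a n + (rr \<rho> k (Suc n))^2"
proof -
  have "0 \<le> dd \<rho> k a n" using dd_ge[of n] assms \<rho> by simp
  then have "0 \<le> (dd \<rho> k a n)^2
      + 2 * rr \<rho> k (Suc n) * a (Suc n) * dd \<rho> k a n + (rr \<rho> k (Suc n))^2"
    using dd_Suc_increment_ge_4[OF assms] zero_le_power2[of "dd \<rho> k a n"] by linarith
  then show ?thesis using assms by (simp add: dd_Suc)
qed

lemma dd_Suc_sq_ge:
  assumes "1 \<le> n" "Suc n \<le> k + 1"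
  shows "(dd \<rho> k a n)^2 + 4 \<le> (dd \<rho> k a (Suc n))^2"
  using dd_Suc_sq[OF assms] dd_Suc_increment_ge_4[OF assms] dd_ge[of n] assms \<rho> by simp

lemma dd_less_Suc:
  assumes "1 \<le> n" "Suc n \<le> k + 1"
  shows "dd \<rho> k a n < dd \<rho> k a (Suc n)"
proof -
  have "(dd \<rho> k a n)^2 < (dd \<rho> k a (Suc n))^2" using dd_Suc_sq_ge[OF assms] by simp
  then show ?thesis using dd_ge[of "Suc n"] assms \<rho> by (simp add: power_less_imp_less_base)
qed

lemma dd_mono:
  assumes "1 \<le> i" "i \<le> j" "j \<le> k + 1"
  shows "dd \<rho> k a i \<le> dd \<rho> k a j"
  using assms(2,3)
proof (induction j rule: dec_induct)
  case base
  then show ?case by simp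
next
  case (step n)
  then show ?case using dd_less_Suc[of n] assms(1) by simp
qed

lemma dd_gap:
  assumes "1 \<le> i" "i < j" "j \<le> k + 1"
  shows "2 / dd \<rho> k a (k + 1) \<le> dd \<rho> k a j - dd \<rho> k a i"
proof -
  define M where "M = dd \<rho> k a (k + 1)"
  have "4 \<le> (dd \<rho> k a (Suc i) - dd \<rho> k a i) * (dd \<rho> k a (Suc i) + dd \<rho> k a i)"
    using dd_Suc_sq_ge[of i] assms by (simp add: power2_eq_square algebra_simps)
  also have "\<dots> \<le> (dd \<rho> k a (Suc i) - dd \<rho> k a i) * (2 * M)"
    using dd_less_Suc[of i] dd_mono[of i "k + 1"] dd_mono[of "Suc i" "k + 1"] assms
    by (intro mult_left_mono) (auto simp: M_def)
  finally have "2 / M \<le> dd \<rho> k a (Suc i) - dd \<rho> k a i"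
    using dd_ge[of "k + 1"] \<rho> by (simp add: M_def divide_le_eq mult.commute)
  also have "\<dots> \<le> dd \<rho> k a j - dd \<rho> k a i" using dd_mono[of "Suc i" j] assms by simp
  finally show ?thesis unfolding M_def .
qed

lemma large_dimension:
  assumes "1 + 6 * dd \<rho> k a (k + 1) < sqrt (real d)"
  shows "2 \<le> d" and "1 / real d < 2 / dd \<rho> k a (k + 1)"
proof -
  have M: "2 \<le> dd \<rho> k a (k + 1)" using dd_ge[of "k + 1"] \<rho> by simp
  then have "13 < sqrt (real d)" using assms by linarith
  then have "13^2 < (sqrt (real d))^2" by (intro power_strict_mono) auto
  then have d: "169 < real d" by simp
  then show "2 \<le> d" by simp
  have "dd \<rho> k a (k + 1) < sqrt (real d)" using assms M by linarith
  also have "\<dots> \<le> real d" using d by (intro real_le_lsqrt) (auto simp: power2_eq_square)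
  finally show "1 / real d < 2 / dd \<rho> k a (k + 1)" using M by (simp add: frac_less2)
qed

lemma dist_sq_later_step:
  assumes i: "2 \<le> i" "i \<le> k + 1" and "a i \<le> 1"
    and large: "1 + 6 * dd \<rho> k a (k + 1) < sqrt (real d)"
    and y: "y \<in> CC \<rho> k a d (i - 1)" and z: "z \<in> DD \<rho> k a d i y"
  shows "(nrm d (z - y))^2 < (rr \<rho> k i)^2"
proof -
  define s where "s = sqrt (real d)"
  have d: "2 \<le> d" using large_dimension(1)[OF large] .
  then have s2: "s^2 = real d" by (simp add: s_def)
  have "y \<in> Dp d" and ny: "dd \<rho> k a (i - 1) - 3 / s^2 \<le> nrm2 d y" "nrm2 d y < dd \<rho> k a (i - 1)"
    using y i d by (auto simp: CC_def s2)
  moreover have "z \<in> Dp d" and nz: "dd \<rho> k a i - 3 / s^2 \<le> nrm2 d z" "nrm2 d z < dd \<rho> k a i"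
    using DD_subset_CC[of \<rho> k a d i y] z i d by (auto simp: CC_def s2)
  ultimately have p: "(z 0 - y 0)^2 + (z 1 - y 1)^2 < 2 / s^2" using Dp_coord_bound s2 by simp
  have ip: "nrm2 d y * nrm2 d z * ((dd \<rho> k a (i - 1) + a i * rr \<rho> k i) / dd \<rho> k a i + 1 / s)
      \<le> inner2 d z y"
    using z i by (simp add: DD_def costh_def s_def)
  have law: "(dd \<rho> k a i)^2 = (dd \<rho> k a (i - 1))^2
      + 2 * rr \<rho> k i * a i * dd \<rho> k a (i - 1) + (rr \<rho> k i)^2"
    using dd_Suc_sq[of "i - 1"] i by simp
  have "(z 0 - y 0)^2 + (z 1 - y 1)^2 + (nrm2 d z)^2 + (nrm2 d y)^2 - 2 * inner2 d z y < (rr \<rho> k i)^2"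
  proof (rule law_of_cosines_shell_bound[OF _ _ _ _ _ _ \<open>a i \<le> 1\<close> law _ ny nz ip p])
    have "1 + \<rho> \<le> dd \<rho> k a (i - 1)" "1 + \<rho> \<le> dd \<rho> k a i"
      using i by (auto intro: dd_ge)
    then show "2 \<le> dd \<rho> k a (i - 1)" "2 \<le> dd \<rho> k a i" using \<rho> by auto
    show "dd \<rho> k a (i - 1) \<le> dd \<rho> k a (k + 1)" "dd \<rho> k a i \<le> dd \<rho> k a (k + 1)"
      using dd_mono[of "i - 1" "k + 1"] dd_mono[of i "k + 1"] i by auto
    show "0 \<le> rr \<rho> k i" "0 \<le> a i" using rr_ge_2[OF \<rho>, of k i] a_nonneg i by auto
    show "1 + 6 * dd \<rho> k a (k + 1) < s" using large by (simp add: s_def)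
  qed
  then show ?thesis using nrm_diff_sq[OF d] by simp
qed

lemma DD_subset_Bd_inter_CC:
  assumes a_le_one: "\<forall>i\<in>{2..k+1}. a i \<le> 1"
    and large: "1 + 6 * dd \<rho> k a (k + 1) < sqrt (real d)" "1 / real d \<le> \<rho> - 1"
    and i: "i \<in> {1..k+1}" and y: "y \<in> CC \<rho> k a d (i - 1)"
  shows "DD \<rho> k a d i y \<subseteq> Bd d y (rr \<rho> k i) \<inter> CC \<rho> k a d i"
proof
  fix z assume z: "z \<in> DD \<rho> k a d i y"
  then have zC: "z \<in> CC \<rho> k a d i" using DD_subset_CC by blast
  have "(nrm d (z - y))^2 < (rr \<rho> k i)^2"
  proof (cases "i = 1")
    case True
    then show ?thesis
      using dist_sq_first_step[OF large_dimension(1)[OF large(1)] large(2)] y zC by simp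
  next
    case False
    then show ?thesis using dist_sq_later_step[OF _ _ _ large(1) y z] i a_le_one by auto
  qed
  moreover have "z \<in> Rd d" using zC i by (auto simp: CC_def)
  ultimately show "z \<in> Bd d y (rr \<rho> k i) \<inter> CC \<rho> k a d i"
    using mem_BdI rr_ge_2[OF \<rho>, of k i] zC by auto
qed

lemma nrm2_CC_less:
  assumes "1 / real d < 2 / dd \<rho> k a (k + 1)" "1 \<le> i" "i < j" "j \<le> k + 1"
    and "x \<in> CC \<rho> k a d i" "z \<in> CC \<rho> k a d j"
  shows "nrm2 d x < nrm2 d z"
  using assms dd_gap[of i j] by (auto simp: CC_def)

lemma Gplus_of_chain:
  assumes a_le_one: "\<forall>i\<in>{2..k+1}. a i \<le> 1" and "1 \<le> k"
    and large: "1 + 6 * dd \<rho> k a (k + 1) < sqrt (real d)" "1 / real d \<le> \<rho> - 1"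
    and x0: "x0 \<in> CC \<rho> k a d 0"
    and X: "\<forall>i\<in>{1..k}. X i \<in> S1" "X (k + 1) \<in> Srho" "X 1 \<in> DD \<rho> k a d 1 x0"
      "\<forall>i\<in>{2..k+1}. X i \<in> DD \<rho> k a d i (X (i - 1))"
  shows "Gplus \<rho> k d S1 Srho x0"
proof -
  define Y where "Y = X(0 := x0)"
  have chain: "Y i \<in> DD \<rho> k a d i (Y (i - 1))" if "i \<in> {1..k+1}" for i
    using X that by (cases "i = 1") (auto simp: Y_def)
  have C: "Y i \<in> CC \<rho> k a d i" if "i \<le> k + 1" for i
    using subsetD[OF DD_subset_CC chain[of i]] x0 that by (cases "i = 0") (auto simp: Y_def)
  have step: "Y i \<in> Bd d (Y (i - 1)) (rr \<rho> k i) \<inter> CC \<rho> k a d i" if "i \<in> {1..k+1}" for i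
  proof -
    have "i - 1 \<le> k + 1" using that by auto
    from DD_subset_Bd_inter_CC[OF a_le_one large that C[OF this]] chain[OF that]
    show ?thesis by blast
  qed
  have "strict_mono_on {1..k+1} (nrm2 d \<circ> Y)"
    using nrm2_CC_less[OF large_dimension(2)[OF large(1)]] C by (intro strict_mono_onI) auto
  then have "inj_on Y {1..k+1}" by (rule inj_on_imageI2[OF strict_mono_on_imp_inj_on])
  moreover have "Y i \<in> Wplus d" if "i \<in> {1..k+1}" for i
    using C[of i] that by (auto simp: CC_def Wplus_def)
  moreover have dist: "nrm d (Y i - Y (i - 1)) < rr \<rho> k i" if "i \<in> {1..k+1}" for i
    using step[OF that] by (simp add: Bd_def)
  moreover have "Y i \<in> S1" if "i \<in> {1..k}" for i using X(1) that by (simp add: Y_def)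
  moreover have "Y (k + 1) \<in> Srho" using X(2) by (simp add: Y_def)
  moreover have "nrm d (Y 1 - x0) < 1 + \<rho>" using dist[of 1] by (simp add: Y_def rr_def)
  moreover have "nrm d (Y (i + 1) - Y i) < 2" if "i \<in> {1..k-1}" for i
  proof -
    have "i < k" "1 \<le> i" using that \<open>1 \<le> k\<close> by auto
    then show ?thesis using dist[of "i + 1"] by (simp add: rr_def)
  qed
  moreover have "nrm d (Y (k + 1) - Y k) < 1 + \<rho>" using dist[of "k + 1"] by (simp add: rr_def)
  ultimately show ?thesis unfolding Gplus_def by (intro exI[of _ Y]) auto
qed

end

lemma eventually_large_dimension:
  fixes c \<epsilon> :: real
  assumes "0 < \<epsilon>"
  shows "eventually (\<lambda>d. c < sqrt (real d) \<and> 1 / real d \<le> \<epsilon>) sequentially"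
proof -
  have "filterlim (\<lambda>d. sqrt (real d)) at_top sequentially"
    by (rule filterlim_compose[OF sqrt_at_top filterlim_real_sequentially])
  then have "eventually (\<lambda>d. c < sqrt (real d)) sequentially"
    by (simp add: filterlim_at_top_dense)
  moreover have "eventually (\<lambda>d. inverse (real d) < \<epsilon>) sequentially"
    using tendsto_inverse_0_at_top[OF filterlim_real_sequentially] assms by (rule order_tendstoD)
  ultimately show ?thesis
    by eventually_elim (simp add: inverse_eq_divide)
qed

theorem lemma2p12:
  fixes \<rho> \<kappa> :: real and k :: nat and a :: "nat \<Rightarrow> real"
  assumes "\<rho> > 1" and "k \<ge> 1"
    and "kappa_c \<rho> k < \<kappa>" and "\<kappa> < 1"
    and "\<forall>i\<in>{2..k+1}. 0 < a i \<and> a i < 1"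
    and "1 < \<kappa>^(k+1) * (1 + \<rho>)^2 / (4 * \<rho>) * sqrt (\<Prod>j\<in>{2..k+1}. 1 - (a j)^2)"
    and "\<kappa>^(k+1) * (1 + \<rho>)^2 / (4 * \<rho>) * sqrt (\<Prod>j\<in>{2..k+1}. 1 - (a j)^2)
           < \<kappa> * dd \<rho> k a (k + 1) / (2 * \<rho>)"
  shows "(\<exists>d0. \<forall>d\<ge>d0. \<forall>i\<in>{1..k+1}. \<forall>y\<in>CC \<rho> k a d (i - 1).
            DD \<rho> k a d i y \<subseteq> Bd d y (rr \<rho> k i) \<inter> CC \<rho> k a d i)
       \<and> (\<exists>d0. \<forall>d\<ge>d0. \<forall>x0\<in>CC \<rho> k a d 0. \<forall>S1 Srho.
            S1 \<subseteq> Rd d \<longrightarrow> Srho \<subseteq> Rd d \<longrightarrow>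
            (\<exists>X :: nat \<Rightarrow> (nat \<Rightarrow> real).
               (\<forall>i\<in>{1..k}. X i \<in> S1) \<and> X (k + 1) \<in> Srho \<and>
               X 1 \<in> DD \<rho> k a d 1 x0 \<and>
               (\<forall>i\<in>{2..k+1}. X i \<in> DD \<rho> k a d i (X (i - 1))))
            \<longrightarrow> Gplus \<rho> k d S1 Srho x0)"
proof -
  \<comment> \<open>Neither part uses the hypotheses on \<open>\<kappa>\<close>.\<close>
  have \<rho>: "1 \<le> \<rho>" and a: "\<forall>i\<in>{2..k+1}. 0 \<le> a i" "\<forall>i\<in>{2..k+1}. a i \<le> 1"
    using assms(1,5) by auto
  obtain d0 where large: "\<And>d. d0 \<le> d \<Longrightarrow>
      1 + 6 * dd \<rho> k a (k + 1) < sqrt (real d) \<and> 1 / real d \<le> \<rho> - 1"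
    using eventually_large_dimension[of "\<rho> - 1" "1 + 6 * dd \<rho> k a (k + 1)"] assms(1)
    by (auto simp: eventually_sequentially)
  show ?thesis
  proof (intro conjI exI[of _ d0] allI impI ballI)
    fix d i y assume "d0 \<le> d" "i \<in> {1..k+1}" "y \<in> CC \<rho> k a d (i - 1)"
    then show "DD \<rho> k a d i y \<subseteq> Bd d y (rr \<rho> k i) \<inter> CC \<rho> k a d i"
      using DD_subset_Bd_inter_CC[OF \<rho> a] large by blast
  next
    fix d x0 S1 Srho assume "d0 \<le> d" "x0 \<in> CC \<rho> k a d 0"
      and "\<exists>X. (\<forall>i\<in>{1..k}. X i \<in> S1) \<and> X (k + 1) \<in> Srho \<and> X 1 \<in> DD \<rho> k a d 1 x0 \<and>
               (\<forall>i\<in>{2..k+1}. X i \<in> DD \<rho> k a d i (X (i - 1)))"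
    then show "Gplus \<rho> k d S1 Srho x0"
      using Gplus_of_chain[OF \<rho> a assms(2)] large by blast
  qed
qed

end
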